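(* For every triple of partitions $\lambda=(\lambda^{(1)},\lambda^{(2)},\lambda^{(3)})\vdash_n d$ one has $k(\lambda)\le N(\lambda)$.
   Context: $\lambda\vdash_n d$ means each $\lambda^{(k)}$ is a partition of $d$ with at most $n$ nonzero parts. The Kronecker coefficient $k(\lambda)$ is the dimension of the space of $S_d$-invariants in $[\lambda^{(1)}]\otimes[\lambda^{(2)}]\otimes[\lambda^{(3)}]$, where $[\mu]$ is the irreducible (Specht) representation of the symmetric group $S_d$ indexed by $\mu$; equivalently it is the dimension of the space of highest weight vectors of weight $\lambda^*$ in $\mathrm{Sym}^d\bigotimes^3(\mathbb C^n)^*$. An obstruction design is a subset $\mathcal H\subseteq[\ell_1]\times[\ell_2]\times[\ell_3]$; its $k$-slices are the nonempty sets $\{x\in\mathcal H:x_k=i\}$, and its type is $(\lambda^{(1)},\lambda^{(2)},\lambda^{(3)})$ where $\lambda^{(k)}$ is the transpose of the partition obtained by sorting the $k$-slice sizes nonincreasingly. Let $\ell_k=\lambda^{(k)}_1$. $N(\lambda)$ is the number of orbits, under the natural action of $S_{\ell_1}\times S_{\ell_2}\times S_{\ell_3}$ permuting coordinates in each direction, of the set of obstruction designs $\mathcal H\subseteq[\ell_1]\times[\ell_2]\times[\ell_3]$ of type $\lambda$. *)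

theory Defs
  imports Complex_Main "HOL-Combinatorics.Permutations" "HOL-Library.Function_Algebras"
    "HOL-Library.Multiset"
begin

definition is_partition :: "nat \<Rightarrow> nat list \<Rightarrow> bool" where
  "is_partition d mu \<longleftrightarrow> sorted_wrt (\<ge>) mu \<and> (\<forall>x\<in>set mu. 0 < x) \<and> sum_list mu = d"

definition partition_le :: "nat \<Rightarrow> nat \<Rightarrow> nat list \<Rightarrow> bool" where
  "partition_le n d mu \<longleftrightarrow> is_partition d mu \<and> length mu \<le> n"

definition first_part :: "nat list \<Rightarrow> nat" where
  "first_part mu = (if mu = [] then 0 else hd mu)"

definition conj_part :: "nat list \<Rightarrow> nat list" where
  "conj_part mu = map (\<lambda>j. length (filter (\<lambda>x. j < x) mu)) [0..<first_part mu]"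

text \<open>Young diagram cells (row, column), 0-indexed.\<close>
definition cells :: "nat list \<Rightarrow> (nat \<times> nat) set" where
  "cells mu = {(i, j). i < length mu \<and> j < mu ! i}"

definition tableaux :: "nat \<Rightarrow> nat list \<Rightarrow> (nat \<times> nat \<Rightarrow> nat) set" where
  "tableaux d mu = {T. bij_betw T (cells mu) {0..<d}}"

text \<open>The tabloid {T}, encoded as the map sending each entry x < d to its row.\<close>
definition tabloid :: "nat \<Rightarrow> nat list \<Rightarrow> (nat \<times> nat \<Rightarrow> nat) \<Rightarrow> (nat \<Rightarrow> nat)" where
  "tabloid d mu T = (\<lambda>x. if x < d then fst (inv_into (cells mu) T x) else 0)"

definition col_group :: "nat \<Rightarrow> nat list \<Rightarrow> (nat \<times> nat \<Rightarrow> nat) \<Rightarrow> (nat \<Rightarrow> nat) set" where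
  "col_group d mu T = {p. p permutes {0..<d} \<and>
     (\<forall>x<d. snd (inv_into (cells mu) T (p x)) = snd (inv_into (cells mu) T x))}"

text \<open>Polytabloid e_T = sum over p in C_T of sign(p) {p T}, as an element of the
  permutation module M^mu (functions on tabloids).\<close>
definition polytabloid :: "nat \<Rightarrow> nat list \<Rightarrow> (nat \<times> nat \<Rightarrow> nat) \<Rightarrow> (nat \<Rightarrow> nat) \<Rightarrow> complex" where
  "polytabloid d mu T = (\<lambda>t. \<Sum>p\<in>col_group d mu T.
      of_int (sign p) * (if t = tabloid d mu (p \<circ> T) then 1 else 0))"

type_synonym tabtriple = "(nat \<Rightarrow> nat) \<times> (nat \<Rightarrow> nat) \<times> (nat \<Rightarrow> nat)"

definition fscale :: "complex \<Rightarrow> (tabtriple \<Rightarrow> complex) \<Rightarrow> (tabtriple \<Rightarrow> complex)" where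
  "fscale c f = (\<lambda>x. c * f x)"

text \<open>[mu1] (x) [mu2] (x) [mu3], realised inside M^mu1 (x) M^mu2 (x) M^mu3 = functions on
  triples of tabloids, as the span of the products of polytabloids.\<close>
definition specht_triple :: "nat \<Rightarrow> nat list \<Rightarrow> nat list \<Rightarrow> nat list \<Rightarrow> (tabtriple \<Rightarrow> complex) set" where
  "specht_triple d mu1 mu2 mu3 = module.span fscale
     {(\<lambda>(t1, t2, t3). polytabloid d mu1 T1 t1 * polytabloid d mu2 T2 t2 * polytabloid d mu3 T3 t3)
       | T1 T2 T3. T1 \<in> tableaux d mu1 \<and> T2 \<in> tableaux d mu2 \<and> T3 \<in> tableaux d mu3}"

text \<open>Diagonal S_d action: (s . F)(t1,t2,t3) = F(s^-1 . t1, ...), where (s . t)(x) = t(s^-1 x).\<close>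
definition perm_act :: "(nat \<Rightarrow> nat) \<Rightarrow> (tabtriple \<Rightarrow> complex) \<Rightarrow> (tabtriple \<Rightarrow> complex)" where
  "perm_act s F = (\<lambda>(t1, t2, t3). F (t1 \<circ> s, t2 \<circ> s, t3 \<circ> s))"

definition invariants :: "nat \<Rightarrow> nat list \<Rightarrow> nat list \<Rightarrow> nat list \<Rightarrow> (tabtriple \<Rightarrow> complex) set" where
  "invariants d mu1 mu2 mu3 = {F \<in> specht_triple d mu1 mu2 mu3.
      \<forall>s. s permutes {0..<d} \<longrightarrow> perm_act s F = F}"

definition kronecker :: "nat list \<Rightarrow> nat list \<Rightarrow> nat list \<Rightarrow> nat" where
  "kronecker mu1 mu2 mu3 = vector_space.dim fscale (invariants (sum_list mu1) mu1 mu2 mu3)"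

type_synonym point = "nat \<times> nat \<times> nat"

definition coord :: "nat \<Rightarrow> point \<Rightarrow> nat" where
  "coord k x = (if k = 1 then fst x else if k = 2 then fst (snd x) else snd (snd x))"

definition slice :: "nat \<Rightarrow> point set \<Rightarrow> nat \<Rightarrow> point set" where
  "slice k H i = {x \<in> H. coord k x = i}"

definition slice_sizes :: "nat \<Rightarrow> nat \<Rightarrow> point set \<Rightarrow> nat list" where
  "slice_sizes k l H = rev (sorted_list_of_multiset
      (image_mset (\<lambda>i. card (slice k H i)) (mset_set {i \<in> {0..<l}. slice k H i \<noteq> {}})))"

definition box :: "nat \<Rightarrow> nat \<Rightarrow> nat \<Rightarrow> point set" where
  "box l1 l2 l3 = {0..<l1} \<times> {0..<l2} \<times> {0..<l3}"

definition designs :: "nat list \<Rightarrow> nat list \<Rightarrow> nat list \<Rightarrow> point set set" where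
  "designs mu1 mu2 mu3 = {H. H \<subseteq> box (first_part mu1) (first_part mu2) (first_part mu3) \<and>
      conj_part (slice_sizes 1 (first_part mu1) H) = mu1 \<and>
      conj_part (slice_sizes 2 (first_part mu2) H) = mu2 \<and>
      conj_part (slice_sizes 3 (first_part mu3) H) = mu3}"

definition design_orbit :: "nat \<Rightarrow> nat \<Rightarrow> nat \<Rightarrow> point set \<Rightarrow> point set set" where
  "design_orbit l1 l2 l3 H = {(\<lambda>(a, b, c). (p1 a, p2 b, p3 c)) ` H | p1 p2 p3.
      p1 permutes {0..<l1} \<and> p2 permutes {0..<l2} \<and> p3 permutes {0..<l3}}"

definition num_designs :: "nat list \<Rightarrow> nat list \<Rightarrow> nat list \<Rightarrow> nat" where
  "num_designs mu1 mu2 mu3 = card (design_orbit (first_part mu1) (first_part mu2) (first_part mu3)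
      ` designs mu1 mu2 mu3)"

end

theory Submission
  imports Defs
begin

text \<open>
  The space of S_d-invariants of
  [lambda1] (x) [lambda2] (x) [lambda3] is the image of the Reynolds operator
  R = sum of all s in S_d, so it is spanned by the vectors R(e_T1 (x) e_T2 (x) e_T3)
  for triples of tableaux.  To a triple associate the column map
  x |-> (column of x in T1, column of x in T2, column of x in T3).
  (1) If the column map is not injective, two entries x, y share their column in
      all three tableaux; the transposition (x y) then acts by -1 on the product
      of polytabloids, so its Reynolds image is 0.
  (2) If it is injective, its image is an obstruction design of type lambda, and
      two triples whose designs lie in the same orbit have Reynolds images that
      agree up to a scalar, because relabelling entries and permuting columns
      changes polytabloids only by signs.
  Hence the invariants are spanned by one vector per design orbit.
\<close>

interpretation V: vector_space fscale
  by unfold_locales (auto simp: fscale_def algebra_simps)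

context vector_space
begin

lemma span_by_classes:
  assumes fin: "finite C"
    and zero: "\<And>a. a \<in> A \<Longrightarrow> \<not> P a \<Longrightarrow> v a = 0"
    and cls: "\<And>a. a \<in> A \<Longrightarrow> P a \<Longrightarrow> cls a \<in> C"
    and same: "\<And>a b. a \<in> A \<Longrightarrow> b \<in> A \<Longrightarrow> P a \<Longrightarrow> P b \<Longrightarrow> cls a = cls b
                 \<Longrightarrow> \<exists>e. v a = e *s v b"
  shows "\<exists>G. finite G \<and> card G \<le> card C \<and> v ` A \<subseteq> span G"
proof -
  define used where "used = {c \<in> C. \<exists>a\<in>A. P a \<and> cls a = c}"
  define rep where "rep c = (SOME a. a \<in> A \<and> P a \<and> cls a = c)" for c
  define G where "G = (v \<circ> rep) ` used"
  have sub: "used \<subseteq> C" by (auto simp: used_def)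
  hence "finite G" using fin by (simp add: G_def finite_subset)
  moreover have "card G \<le> card C"
    unfolding G_def using le_trans[OF card_image_le[OF finite_subset[OF sub fin]] card_mono[OF fin sub]] .
  moreover have "v a \<in> span G" if a: "a \<in> A" for a
  proof (cases "P a")
    case True
    have u: "cls a \<in> used" using a True cls by (auto simp: used_def)
    have "rep (cls a) \<in> A \<and> P (rep (cls a)) \<and> cls (rep (cls a)) = cls a"
      unfolding rep_def by (rule someI[of _ a]) (use a True in simp)
    then obtain e where "v a = e *s v (rep (cls a))" using same a True by metis
    moreover have "v (rep (cls a)) \<in> span G" using u by (auto simp: G_def intro: span_base)
    ultimately show ?thesis by (simp add: span_scale)
  next
    case False
    thus ?thesis using zero a by (simp add: span_zero)
  qed
  ultimately show ?thesis by blast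
qed

end

section \<open>Polytabloids as functions of rows and columns\<close>

text \<open>A polytabloid depends only on the row r and column c of each entry x < d:
  it is the signed sum, over the column stabiliser, of the tabloids obtained by
  moving the entries.\<close>

definition col_stab :: "nat \<Rightarrow> (nat \<Rightarrow> nat) \<Rightarrow> (nat \<Rightarrow> nat) set" where
  "col_stab d c = {p. p permutes {0..<d} \<and> (\<forall>x<d. c (p x) = c x)}"

definition moved_tabloid :: "nat \<Rightarrow> (nat \<Rightarrow> nat) \<Rightarrow> (nat \<Rightarrow> nat) \<Rightarrow> (nat \<Rightarrow> nat)" where
  "moved_tabloid d r p = (\<lambda>x. if x < d then r (inv p x) else 0)"

definition gen_polytabloid :: "nat \<Rightarrow> (nat \<Rightarrow> nat) \<Rightarrow> (nat \<Rightarrow> nat) \<Rightarrow> (nat \<Rightarrow> nat) \<Rightarrow> complex" where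
  "gen_polytabloid d r c t =
     (\<Sum>p\<in>col_stab d c. of_int (sign p) * (if t = moved_tabloid d r p then 1 else 0))"

lemma permutation_of_permutes: "p permutes {0..<(d::nat)} \<Longrightarrow> permutation p"
  unfolding permutation_permutes by (rule exI[of _ "{0..<d}"]) simp

lemma permutes_lt: "p permutes {0..<(d::nat)} \<Longrightarrow> x < d \<Longrightarrow> p x < d"
  using permutes_in_image[of p "{0..<d}" x] by auto

lemma permutes_inv_lt: "p permutes {0..<(d::nat)} \<Longrightarrow> x < d \<Longrightarrow> inv p x < d"
  using permutes_lt[OF permutes_inv] .

lemma col_stab_comp: "p \<in> col_stab d c \<Longrightarrow> q \<in> col_stab d c \<Longrightarrow> p \<circ> q \<in> col_stab d c"
  by (auto simp: col_stab_def permutes_compose permutes_lt)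

lemma col_stab_inv:
  assumes "p \<in> col_stab d c" shows "inv p \<in> col_stab d c"
proof -
  have p: "p permutes {0..<d}" and hp: "\<forall>x<d. c (p x) = c x"
    using assms by (auto simp: col_stab_def)
  have "c (inv p x) = c x" if "x < d" for x
    using hp permutes_inv_lt[OF p that] permutes_inverses(1)[OF p, of x] by metis
  thus ?thesis using permutes_inv[OF p] by (simp add: col_stab_def)
qed

lemma col_stab_right_mult:
  assumes "g \<in> col_stab d c"
  shows "bij_betw (\<lambda>p. p \<circ> inv g) (col_stab d c) (col_stab d c)"
proof (rule bij_betw_byWitness[where f' = "\<lambda>q. q \<circ> g"])
  have g: "g permutes {0..<d}" using assms by (simp add: col_stab_def)
  show "\<forall>a\<in>col_stab d c. a \<circ> inv g \<circ> g = a" "\<forall>a\<in>col_stab d c. a \<circ> g \<circ> inv g = a"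
    using g by (simp_all add: o_assoc[symmetric] permutes_inv_o)
  show "(\<lambda>p. p \<circ> inv g) ` col_stab d c \<subseteq> col_stab d c"
    using col_stab_comp col_stab_inv[OF assms] by blast
  show "(\<lambda>q. q \<circ> g) ` col_stab d c \<subseteq> col_stab d c"
    using col_stab_comp assms by blast
qed

lemma gen_polytabloid_transport:
  assumes g: "g permutes {0..<d}"
    and gc: "\<forall>x<d. c (g x) = c x"
    and gr: "\<forall>x<d. r' (g x) = r x"
    and cc: "\<forall>x<d. \<forall>y<d. c' x = c' y \<longleftrightarrow> c x = c y"
  shows "gen_polytabloid d r c t = of_int (sign g) * gen_polytabloid d r' c' t"
proof -
  have same_stab: "col_stab d c' = col_stab d c"
    unfolding col_stab_def using cc permutes_lt by blast
  have gC: "g \<in> col_stab d c" using g gc by (simp add: col_stab_def)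
  have term_eq: "of_int (sign (p \<circ> inv g)) * (if t = moved_tabloid d r' (p \<circ> inv g) then 1 else 0)
      = of_int (sign g) * (of_int (sign p) * (if t = moved_tabloid d r p then 1 else (0::complex)))"
    if "p \<in> col_stab d c" for p
  proof -
    have p: "p permutes {0..<d}" using that by (simp add: col_stab_def)
    have "sign (p \<circ> inv g) = sign p * sign g"
      using sign_compose[OF permutation_of_permutes[OF p] permutation_of_permutes[OF permutes_inv[OF g]]]
        sign_inverse[OF permutation_of_permutes[OF g]] by simp
    moreover have "inv (p \<circ> inv g) = g \<circ> inv p"
      using o_inv_distrib[OF permutes_bij[OF p] bij_imp_bij_inv[OF permutes_bij[OF g]]]
        inv_inv_eq[OF permutes_bij[OF g]] by simp
    hence "moved_tabloid d r' (p \<circ> inv g) = moved_tabloid d r p"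
      unfolding moved_tabloid_def using gr permutes_inv_lt[OF p] by (auto simp: fun_eq_iff)
    ultimately show ?thesis by (simp add: mult.commute)
  qed
  have "gen_polytabloid d r' c' t
      = (\<Sum>p\<in>col_stab d c. of_int (sign (p \<circ> inv g)) * (if t = moved_tabloid d r' (p \<circ> inv g) then 1 else 0))"
    unfolding gen_polytabloid_def same_stab
    using sum.reindex_bij_betw[OF col_stab_right_mult[OF gC], symmetric] by simp
  also have "\<dots> = of_int (sign g) * gen_polytabloid d r c t"
    by (simp add: term_eq gen_polytabloid_def sum_distrib_left)
  finally have "gen_polytabloid d r' c' t = of_int (sign g) * gen_polytabloid d r c t" .
  moreover have "of_int (sign g) * of_int (sign g) = (1::complex)"
    by (metis of_int_1 of_int_mult sign_idempotent)
  ultimately show ?thesis by (metis mult.assoc mult_1)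
qed

lemma col_stab_conj:
  assumes s: "s permutes {0..<d}"
  shows "bij_betw (\<lambda>p. s \<circ> p \<circ> inv s) (col_stab d c) (col_stab d (c \<circ> inv s))"
proof (rule bij_betw_byWitness[where f' = "\<lambda>q. inv s \<circ> q \<circ> s"])
  have is': "inv s permutes {0..<d}" using s by (rule permutes_inv)
  show "\<forall>a\<in>col_stab d c. inv s \<circ> (s \<circ> a \<circ> inv s) \<circ> s = a"
    "\<forall>a\<in>col_stab d (c \<circ> inv s). s \<circ> (inv s \<circ> a \<circ> s) \<circ> inv s = a"
    using s by (auto simp: fun_eq_iff permutes_inverses)
  show "(\<lambda>p. s \<circ> p \<circ> inv s) ` col_stab d c \<subseteq> col_stab d (c \<circ> inv s)"
    using s is' permutes_inv_lt[OF s]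
    by (auto simp: col_stab_def permutes_inverses intro!: permutes_compose)
  show "(\<lambda>q. inv s \<circ> q \<circ> s) ` col_stab d (c \<circ> inv s) \<subseteq> col_stab d c"
  proof clarify
    fix q assume "q \<in> col_stab d (c \<circ> inv s)"
    hence q: "q permutes {0..<d}" and hq: "\<forall>x<d. c (inv s (q x)) = c (inv s x)"
      by (auto simp: col_stab_def)
    have "\<forall>x<d. c (inv s (q (s x))) = c x"
      using hq permutes_lt[OF s] s by (simp add: permutes_inverses)
    thus "inv s \<circ> q \<circ> s \<in> col_stab d c"
      using permutes_compose[OF s permutes_compose[OF q is']] by (simp add: col_stab_def)
  qed
qed

lemma gen_polytabloid_relabel:
  assumes s: "s permutes {0..<d}"
  shows "gen_polytabloid d r c (t \<circ> s) = gen_polytabloid d (r \<circ> inv s) (c \<circ> inv s) t"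
proof -
  have is': "inv s permutes {0..<d}" using s by (rule permutes_inv)
  have term_eq: "of_int (sign (s \<circ> p \<circ> inv s)) *
        (if t = moved_tabloid d (r \<circ> inv s) (s \<circ> p \<circ> inv s) then 1 else 0)
      = of_int (sign p) * (if t \<circ> s = moved_tabloid d r p then 1 else (0::complex))"
    if "p \<in> col_stab d c" for p
  proof -
    have p: "p permutes {0..<d}" using that by (simp add: col_stab_def)
    have "sign (s \<circ> p \<circ> inv s) = sign s * sign p * sign s"
      using sign_compose[OF permutation_of_permutes[OF permutes_compose[OF p s]]
          permutation_of_permutes[OF is']]
        sign_compose[OF permutation_of_permutes[OF s] permutation_of_permutes[OF p]]
        sign_inverse[OF permutation_of_permutes[OF s]] by simp
    hence sg: "sign (s \<circ> p \<circ> inv s) = sign p" by (simp add: mult.commute)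
    have "inv (s \<circ> p \<circ> inv s) = s \<circ> inv p \<circ> inv s"
      using o_inv_distrib[OF bij_comp[OF permutes_bij[OF p] permutes_bij[OF s]] permutes_bij[OF is']]
        o_inv_distrib[OF permutes_bij[OF s] permutes_bij[OF p]] inv_inv_eq[OF permutes_bij[OF s]]
      by (simp add: o_assoc)
    hence L: "moved_tabloid d (r \<circ> inv s) (s \<circ> p \<circ> inv s) = moved_tabloid d r p \<circ> inv s"
      unfolding moved_tabloid_def using s permutes_inv_lt[OF s] permutes_lt[OF s]
      by (auto simp: fun_eq_iff permutes_inverses) (metis permutes_inverses(1))
    have "(t = moved_tabloid d r p \<circ> inv s) \<longleftrightarrow> (t \<circ> s = moved_tabloid d r p)"
      using s by (auto simp: fun_eq_iff permutes_inverses) (metis permutes_inverses(1))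
    thus ?thesis by (simp add: sg L)
  qed
  have "gen_polytabloid d (r \<circ> inv s) (c \<circ> inv s) t
      = (\<Sum>p\<in>col_stab d c. of_int (sign (s \<circ> p \<circ> inv s)) *
           (if t = moved_tabloid d (r \<circ> inv s) (s \<circ> p \<circ> inv s) then 1 else 0))"
    unfolding gen_polytabloid_def using sum.reindex_bij_betw[OF col_stab_conj[OF s], symmetric] by simp
  also have "\<dots> = gen_polytabloid d r c (t \<circ> s)"
    by (simp add: term_eq gen_polytabloid_def)
  finally show ?thesis by simp
qed

definition cell_of :: "nat list \<Rightarrow> (nat \<times> nat \<Rightarrow> nat) \<Rightarrow> nat \<Rightarrow> nat \<times> nat" where
  "cell_of mu T x = inv_into (cells mu) T x"

definition row_of :: "nat list \<Rightarrow> (nat \<times> nat \<Rightarrow> nat) \<Rightarrow> nat \<Rightarrow> nat" where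
  "row_of mu T = (\<lambda>x. fst (cell_of mu T x))"

definition col_of :: "nat list \<Rightarrow> (nat \<times> nat \<Rightarrow> nat) \<Rightarrow> nat \<Rightarrow> nat" where
  "col_of mu T = (\<lambda>x. snd (cell_of mu T x))"

lemma tableau_inj: "T \<in> tableaux d mu \<Longrightarrow> inj_on T (cells mu)"
  by (auto simp: tableaux_def bij_betw_def)

lemma tableau_lt: "T \<in> tableaux d mu \<Longrightarrow> z \<in> cells mu \<Longrightarrow> T z < d"
  by (auto simp: tableaux_def bij_betw_def)

lemma cell_of_entry:
  assumes "T \<in> tableaux d mu" "x < d"
  shows "cell_of mu T x \<in> cells mu" "T (cell_of mu T x) = x"
proof -
  have "x \<in> T ` cells mu" using assms by (auto simp: tableaux_def bij_betw_def)
  thus "cell_of mu T x \<in> cells mu" "T (cell_of mu T x) = x"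
    by (auto simp: cell_of_def inv_into_into f_inv_into_f)
qed

lemma cell_of_cell: "T \<in> tableaux d mu \<Longrightarrow> z \<in> cells mu \<Longrightarrow> cell_of mu T (T z) = z"
  by (simp add: cell_of_def tableau_inj)

lemma cell_of_comp:
  assumes T: "T \<in> tableaux d mu" and p: "p permutes {0..<d}" and x: "x < d"
  shows "inv_into (cells mu) (p \<circ> T) x = cell_of mu T (inv p x)"
proof (rule inv_into_f_eq)
  show "inj_on (p \<circ> T) (cells mu)"
    using tableau_inj[OF T] permutes_inj[OF p] by (simp add: comp_inj_on inj_on_subset)
  show "cell_of mu T (inv p x) \<in> cells mu" "(p \<circ> T) (cell_of mu T (inv p x)) = x"
    using cell_of_entry[OF T permutes_inv_lt[OF p x]] p by (simp_all add: permutes_inverses)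
qed

lemma polytabloid_eq_gen:
  assumes T: "T \<in> tableaux d mu"
  shows "polytabloid d mu T = gen_polytabloid d (row_of mu T) (col_of mu T)"
proof -
  have "col_group d mu T = col_stab d (col_of mu T)"
    by (simp add: col_group_def col_stab_def col_of_def cell_of_def)
  moreover have "tabloid d mu (p \<circ> T) = moved_tabloid d (row_of mu T) p"
    if "p \<in> col_stab d (col_of mu T)" for p
    using cell_of_comp[OF T] that
    by (auto simp: tabloid_def moved_tabloid_def row_of_def col_stab_def fun_eq_iff)
  ultimately show ?thesis unfolding polytabloid_def gen_polytabloid_def fun_eq_iff by simp
qed

definition col_len :: "nat list \<Rightarrow> nat \<Rightarrow> nat" where
  "col_len mu j = length (filter (\<lambda>x. j < x) mu)"

lemma below_col_len:
  "sorted_wrt (\<ge>) mu \<Longrightarrow> i < col_len mu j \<longleftrightarrow> i < length mu \<and> j < mu ! i"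
proof (induction mu arbitrary: i)
  case Nil thus ?case by (simp add: col_len_def)
next
  case (Cons a mu)
  hence IH: "\<And>i. i < col_len mu j \<longleftrightarrow> i < length mu \<and> j < mu ! i"
    and ge: "\<forall>y\<in>set mu. y \<le> a" by auto
  show ?case
  proof (cases "j < a")
    case True
    thus ?thesis using IH by (cases i) (auto simp: col_len_def)
  next
    case False
    hence "filter (\<lambda>x. j < x) mu = []" using ge by (auto simp: filter_empty_conv)
    moreover have "i < length (a # mu) \<Longrightarrow> \<not> j < (a # mu) ! i"
      using False ge by (cases i) (auto, meson nth_mem order.trans not_le)
    ultimately show ?thesis using False by (auto simp: col_len_def)
  qed
qed

lemma cells_col_len: "sorted_wrt (\<ge>) mu \<Longrightarrow> (i, j) \<in> cells mu \<longleftrightarrow> i < col_len mu j"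
  using below_col_len by (simp add: cells_def)

lemma col_len_antimono: "i \<le> j \<Longrightarrow> col_len mu j \<le> col_len mu i"
proof -
  assume "i \<le> j"
  hence "filter (\<lambda>x. j < x) mu = filter (\<lambda>x. j < x) (filter (\<lambda>x. i < x) mu)"
    by simp (metis (lifting) le_less_trans)
  thus ?thesis unfolding col_len_def by (metis length_filter_le)
qed

lemma nth_le_first_part:
  assumes s: "sorted_wrt (\<ge>) mu" and i: "i < length mu"
  shows "mu ! i \<le> first_part mu"
  using i s by (cases i) (auto simp: first_part_def hd_conv_nth sorted_wrt_iff_nth_less)

lemma conj_part_col_len: "conj_part mu = map (col_len mu) [0..<first_part mu]"
  by (simp add: conj_part_def col_len_def)

lemma sorted_rev_conj_part: "sorted (rev (conj_part mu))"
  unfolding conj_part_col_len sorted_rev_iff_nth_mono by (auto intro: col_len_antimono)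

lemma conj_conj:
  assumes "is_partition d mu"
  shows "conj_part (conj_part mu) = mu"
proof (cases "mu = []")
  case True thus ?thesis by (simp add: conj_part_def first_part_def)
next
  case False
  have srt: "sorted_wrt (\<ge>) mu" and pos: "\<forall>x\<in>set mu. 0 < x"
    using assms by (auto simp: is_partition_def)
  define l where "l = first_part mu"
  have "0 < l" using False pos by (simp add: l_def first_part_def)
  moreover have "col_len mu 0 = length mu" using pos by (simp add: col_len_def)
  ultimately have "first_part (conj_part mu) = length mu"
    unfolding conj_part_col_len l_def[symmetric] by (simp add: first_part_def upt_conv_Cons)
  hence cc: "conj_part (conj_part mu) = map (col_len (map (col_len mu) [0..<l])) [0..<length mu]"
    by (metis conj_part_col_len l_def)
  show ?thesis
  proof (rule nth_equalityI)
    show "length (conj_part (conj_part mu)) = length mu" unfolding cc by simp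
    fix i assume "i < length (conj_part (conj_part mu))"
    hence i: "i < length mu" unfolding cc by simp
    have "conj_part (conj_part mu) ! i = length (filter (\<lambda>k. i < col_len mu k) [0..<l])"
      unfolding cc using i by (simp add: col_len_def filter_map o_def)
    also have "\<dots> = card {k. k < l \<and> i < col_len mu k}"
      unfolding length_filter_conv_card by (intro arg_cong[where f = card]) auto
    also have "{k. k < l \<and> i < col_len mu k} = {0..<mu ! i}"
      using below_col_len[OF srt] i nth_le_first_part[OF srt i] by (auto simp: l_def)
    finally show "conj_part (conj_part mu) ! i = mu ! i" by simp
  qed
qed

lemma col_of_lt_first_part:
  assumes T: "T \<in> tableaux d mu" and srt: "sorted_wrt (\<ge>) mu" and x: "x < d"
  shows "col_of mu T x < first_part mu"
  using cell_of_entry(1)[OF T x] nth_le_first_part[OF srt]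
  by (cases "cell_of mu T x") (force simp: cells_def col_of_def)

lemma card_column:
  assumes T: "T \<in> tableaux d mu" and srt: "sorted_wrt (\<ge>) mu"
  shows "card {x. x < d \<and> col_of mu T x = j} = col_len mu j"
proof -
  have "{x. x < d \<and> col_of mu T x = j} = T ` {z \<in> cells mu. snd z = j}"
  proof (intro equalityI subsetI)
    fix x assume "x \<in> {x. x < d \<and> col_of mu T x = j}"
    hence "cell_of mu T x \<in> {z \<in> cells mu. snd z = j}" "T (cell_of mu T x) = x"
      using cell_of_entry[OF T] by (auto simp: col_of_def)
    thus "x \<in> T ` {z \<in> cells mu. snd z = j}" by (metis image_eqI)
  next
    fix y assume "y \<in> T ` {z \<in> cells mu. snd z = j}"
    thus "y \<in> {x. x < d \<and> col_of mu T x = j}"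
      using cell_of_cell[OF T] tableau_lt[OF T] by (auto simp: col_of_def)
  qed
  also have "card \<dots> = card {z \<in> cells mu. snd z = j}"
    by (rule card_image[OF inj_on_subset[OF tableau_inj[OF T]]]) blast
  also have "{z \<in> cells mu. snd z = j} = (\<lambda>i. (i, j)) ` {0..<col_len mu j}"
    using cells_col_len[OF srt] by auto
  also have "card \<dots> = col_len mu j" by (simp add: card_image inj_on_def)
  finally show ?thesis .
qed

section \<open>Obstruction designs from triples of tableaux\<close>

text \<open>If the k-th coordinate of an injective map h is the column in T, the k-slices of
  the image of h are the columns of T, so their sizes form the conjugate of mu.\<close>
lemma slice_sizes_columns:
  assumes T: "T \<in> tableaux d mu" and P: "is_partition d mu"
    and hinj: "inj_on h {0..<d}" and hc: "\<And>x. x < d \<Longrightarrow> coord k (h x) = col_of mu T x"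
  shows "slice_sizes k (first_part mu) (h ` {0..<d}) = conj_part mu"
proof -
  have srt: "sorted_wrt (\<ge>) mu" using P by (simp add: is_partition_def)
  define l where "l = first_part mu"
  have "slice k (h ` {0..<d}) j = h ` {x. x < d \<and> col_of mu T x = j}" for j
    using hc by (auto simp: slice_def)
  moreover have "card (h ` {x. x < d \<and> col_of mu T x = j}) = col_len mu j" for j
    using card_column[OF T srt] card_image[OF inj_on_subset[OF hinj]] by (simp add: subset_iff)
  ultimately have cs: "card (slice k (h ` {0..<d}) j) = col_len mu j" for j by simp
  have "0 < col_len mu j" if "j < l" for j
  proof -
    have "mu \<noteq> []" using that by (auto simp: l_def first_part_def)
    thus ?thesis using below_col_len[OF srt, of 0 j] that by (simp add: l_def first_part_def hd_conv_nth)
  qed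
  hence S: "{i \<in> {0..<l}. slice k (h ` {0..<d}) i \<noteq> {}} = {0..<l}"
    using cs by (auto, metis card.empty less_irrefl)
  have "image_mset (\<lambda>i. card (slice k (h ` {0..<d}) i)) (mset_set {0..<l}) = mset (conj_part mu)"
    unfolding mset_upt[symmetric] conj_part_col_len l_def[symmetric] mset_map[symmetric] cs ..
  hence "slice_sizes k l (h ` {0..<d}) = rev (sort (conj_part mu))"
    unfolding slice_sizes_def S by simp
  also have "sort (conj_part mu) = rev (conj_part mu)"
    by (rule properties_for_sort) (simp_all add: sorted_rev_conj_part)
  finally show ?thesis by (simp add: l_def)
qed

definition col_point :: "nat list \<Rightarrow> nat list \<Rightarrow> nat list \<Rightarrow> (nat \<times> nat \<Rightarrow> nat) \<Rightarrow>
    (nat \<times> nat \<Rightarrow> nat) \<Rightarrow> (nat \<times> nat \<Rightarrow> nat) \<Rightarrow> nat \<Rightarrow> point" where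
  "col_point mu1 mu2 mu3 T1 T2 T3 = (\<lambda>x. (col_of mu1 T1 x, col_of mu2 T2 x, col_of mu3 T3 x))"

lemma col_point_design:
  assumes P1: "is_partition d mu1" and P2: "is_partition d mu2" and P3: "is_partition d mu3"
    and T1: "T1 \<in> tableaux d mu1" and T2: "T2 \<in> tableaux d mu2" and T3: "T3 \<in> tableaux d mu3"
    and inj: "inj_on (col_point mu1 mu2 mu3 T1 T2 T3) {0..<d}"
  shows "col_point mu1 mu2 mu3 T1 T2 T3 ` {0..<d} \<in> designs mu1 mu2 mu3"
proof -
  let ?H = "col_point mu1 mu2 mu3 T1 T2 T3 ` {0..<d}"
  have "?H \<subseteq> box (first_part mu1) (first_part mu2) (first_part mu3)"
    using col_of_lt_first_part[OF T1] col_of_lt_first_part[OF T2] col_of_lt_first_part[OF T3]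
      P1 P2 P3 by (auto simp: box_def col_point_def is_partition_def)
  moreover have "slice_sizes 1 (first_part mu1) ?H = conj_part mu1"
    by (rule slice_sizes_columns[OF T1 P1 inj]) (simp add: coord_def col_point_def)
  moreover have "slice_sizes 2 (first_part mu2) ?H = conj_part mu2"
    by (rule slice_sizes_columns[OF T2 P2 inj]) (simp add: coord_def col_point_def)
  moreover have "slice_sizes 3 (first_part mu3) ?H = conj_part mu3"
    by (rule slice_sizes_columns[OF T3 P3 inj]) (simp add: coord_def col_point_def)
  ultimately show ?thesis using conj_conj[OF P1] conj_conj[OF P2] conj_conj[OF P3]
    by (simp add: designs_def)
qed


section \<open>The Reynolds operator\<close>

definition poly_triple :: "nat \<Rightarrow> nat list \<Rightarrow> nat list \<Rightarrow> nat list \<Rightarrow> (nat \<times> nat \<Rightarrow> nat) \<Rightarrow>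
    (nat \<times> nat \<Rightarrow> nat) \<Rightarrow> (nat \<times> nat \<Rightarrow> nat) \<Rightarrow> tabtriple \<Rightarrow> complex" where
  "poly_triple d mu1 mu2 mu3 T1 T2 T3 = (\<lambda>(t1, t2, t3).
     polytabloid d mu1 T1 t1 * polytabloid d mu2 T2 t2 * polytabloid d mu3 T3 t3)"

definition reynolds :: "nat \<Rightarrow> (tabtriple \<Rightarrow> complex) \<Rightarrow> (tabtriple \<Rightarrow> complex)" where
  "reynolds d F = (\<lambda>t. \<Sum>s\<in>{s. s permutes {0..<d}}. perm_act s F t)"

lemma perm_act_comp: "perm_act s (perm_act g F) = perm_act (s \<circ> g) F"
  by (auto simp: perm_act_def fun_eq_iff o_assoc)

lemma reynolds_perm_act:
  assumes g: "g permutes {0..<d}"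
  shows "reynolds d (perm_act g F) = reynolds d F"
proof -
  have bij: "bij_betw (\<lambda>s. s \<circ> g) {s. s permutes {0..<d}} {s. s permutes {0..<d}}"
  proof (rule bij_betw_byWitness[where f' = "\<lambda>s. s \<circ> inv g"])
    show "\<forall>a\<in>{s. s permutes {0..<d}}. a \<circ> g \<circ> inv g = a"
      "\<forall>a\<in>{s. s permutes {0..<d}}. a \<circ> inv g \<circ> g = a"
      using g by (simp_all add: o_assoc[symmetric] permutes_inv_o)
    show "(\<lambda>s. s \<circ> g) ` {s. s permutes {0..<d}} \<subseteq> {s. s permutes {0..<d}}"
      "(\<lambda>s. s \<circ> inv g) ` {s. s permutes {0..<d}} \<subseteq> {s. s permutes {0..<d}}"
      using g permutes_inv[OF g] by (auto intro: permutes_compose)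
  qed
  have "(\<Sum>s\<in>{s. s permutes {0..<d}}. perm_act (s \<circ> g) F t)
      = (\<Sum>s\<in>{s. s permutes {0..<d}}. perm_act s F t)" for t
    using sum.reindex_bij_betw[OF bij, of "\<lambda>s. perm_act s F t"] by simp
  thus ?thesis by (simp add: reynolds_def perm_act_comp)
qed

lemma reynolds_module_hom: "module_hom fscale fscale (reynolds d)"
proof -
  have m: "module fscale" using V.vector_space_axioms module_iff_vector_space by blast
  show ?thesis
  proof (rule module_hom.intro[OF m m])
    show "module_hom_axioms fscale fscale (reynolds d)"
      by unfold_locales (auto simp: reynolds_def perm_act_def fscale_def fun_eq_iff split_beta
          sum.distrib sum_distrib_left)
  qed
qed

lemma reynolds_invariant:
  assumes "\<And>s. s permutes {0..<d} \<Longrightarrow> perm_act s F = F"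
  shows "reynolds d F = fscale (of_nat (fact d)) F"
proof -
  have "card {s. s permutes {0..<d}} = fact d" by (rule card_permutations) auto
  thus ?thesis using assms by (simp add: reynolds_def fscale_def fun_eq_iff)
qed

lemma invariants_in_reynolds_span:
  "invariants d mu1 mu2 mu3 \<subseteq> V.span ((\<lambda>(T1, T2, T3). reynolds d (poly_triple d mu1 mu2 mu3 T1 T2 T3))
     ` (tableaux d mu1 \<times> tableaux d mu2 \<times> tableaux d mu3))"
  (is "_ \<subseteq> V.span ?R")
proof
  fix F assume F: "F \<in> invariants d mu1 mu2 mu3"
  let ?B = "(\<lambda>(T1, T2, T3). poly_triple d mu1 mu2 mu3 T1 T2 T3)
     ` (tableaux d mu1 \<times> tableaux d mu2 \<times> tableaux d mu3)"
  have "specht_triple d mu1 mu2 mu3 = V.span ?B"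
    unfolding specht_triple_def poly_triple_def
    by (rule arg_cong[where f = V.span]) (auto simp: image_iff, blast)
  hence "{F} \<subseteq> V.span ?B" using F by (simp add: invariants_def)
  hence "reynolds d F \<in> V.span (reynolds d ` ?B)"
    using module_hom.spans_image[OF reynolds_module_hom] by blast
  moreover have "reynolds d ` ?B = ?R" by (auto simp: image_image split_beta)
  ultimately have "fscale (1 / of_nat (fact d)) (reynolds d F) \<in> V.span ?R"
    by (simp add: V.span_scale)
  moreover have "reynolds d F = fscale (of_nat (fact d)) F"
    using F by (intro reynolds_invariant) (auto simp: invariants_def)
  ultimately show "F \<in> V.span ?R" by (simp add: fscale_def)
qed

section \<open>Degenerate triples have vanishing Reynolds image\<close>

lemma gen_polytabloid_swap_column:
  assumes x: "x < d" and y: "y < d" and cxy: "c x = c y"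
  shows "gen_polytabloid d (r \<circ> transpose x y) (c \<circ> transpose x y) t
     = of_int (sign (transpose x y)) * gen_polytabloid d r c t"
proof (rule gen_polytabloid_transport)
  show "transpose x y permutes {0..<d}" using x y by (simp add: permutes_swap_id)
  have "c (transpose x y z) = c z" for z
    using cxy by (cases "z = x"; cases "z = y") auto
  thus "\<forall>z<d. (c \<circ> transpose x y) (transpose x y z) = (c \<circ> transpose x y) z"
    "\<forall>z<d. \<forall>w<d. c z = c w \<longleftrightarrow> (c \<circ> transpose x y) z = (c \<circ> transpose x y) w"
    by simp_all
qed simp

text \<open>If two distinct entries share their column in all three tableaux, the
  transposition swapping them acts by -1, so the Reynolds image is zero.\<close>
lemma reynolds_vanishes:
  assumes T1: "T1 \<in> tableaux d mu1" and T2: "T2 \<in> tableaux d mu2" and T3: "T3 \<in> tableaux d mu3"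
    and not_inj: "\<not> inj_on (col_point mu1 mu2 mu3 T1 T2 T3) {0..<d}"
  shows "reynolds d (poly_triple d mu1 mu2 mu3 T1 T2 T3) = 0"
proof -
  obtain x y where x: "x < d" and y: "y < d" and xy: "x \<noteq> y"
    and same: "col_point mu1 mu2 mu3 T1 T2 T3 x = col_point mu1 mu2 mu3 T1 T2 T3 y"
    using not_inj unfolding inj_on_def by auto
  let ?tau = "transpose x y"
  have tau: "?tau permutes {0..<d}" using x y by (simp add: permutes_swap_id)
  have flip: "polytabloid d mu T (t \<circ> ?tau) = - polytabloid d mu T t"
    if T: "T \<in> tableaux d mu" and c: "col_of mu T x = col_of mu T y" for mu T t
    unfolding polytabloid_eq_gen[OF T] gen_polytabloid_relabel[OF tau] inv_transpose_eq
      gen_polytabloid_swap_column[OF x y c] by (simp add: sign_swap_id xy)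
  have "perm_act ?tau (poly_triple d mu1 mu2 mu3 T1 T2 T3)
      = fscale (-1) (poly_triple d mu1 mu2 mu3 T1 T2 T3)"
    using same by (auto simp: perm_act_def poly_triple_def fscale_def col_point_def fun_eq_iff
        flip[OF T1] flip[OF T2] flip[OF T3])
  hence "reynolds d (poly_triple d mu1 mu2 mu3 T1 T2 T3)
      = fscale (-1) (reynolds d (poly_triple d mu1 mu2 mu3 T1 T2 T3))"
    using reynolds_perm_act[OF tau] module_hom.scale[OF reynolds_module_hom] by metis
  thus ?thesis by (simp add: fscale_def fun_eq_iff)
qed

section \<open>Triples with designs in the same orbit\<close>

lemma col_len_relabel:
  assumes T: "T \<in> tableaux d mu" and T': "T' \<in> tableaux d mu" and srt: "sorted_wrt (\<ge>) mu"
    and s: "s permutes {0..<d}" and pm: "inj pm"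
    and hc: "\<forall>x<d. col_of mu T' (s x) = pm (col_of mu T x)"
  shows "col_len mu (pm j) = col_len mu j"
proof -
  have column: "{z. z < d \<and> col_of mu T' z = pm j} = s ` {x. x < d \<and> col_of mu T x = j}"
  proof (intro equalityI subsetI)
    fix z assume z: "z \<in> {z. z < d \<and> col_of mu T' z = pm j}"
    let ?x = "inv s z"
    have x: "?x < d" and sx: "s ?x = z"
      using z permutes_inv_lt[OF s] permutes_inverses(1)[OF s] by auto
    hence "pm (col_of mu T ?x) = pm j" using hc z by auto
    hence "col_of mu T ?x = j" using pm by (simp add: inj_eq)
    thus "z \<in> s ` {x. x < d \<and> col_of mu T x = j}" using x sx by (intro image_eqI[of _ _ ?x]) auto
  next
    fix z assume "z \<in> s ` {x. x < d \<and> col_of mu T x = j}"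
    thus "z \<in> {z. z < d \<and> col_of mu T' z = pm j}" using hc permutes_lt[OF s] by auto
  qed
  have "col_len mu (pm j) = card (s ` {x. x < d \<and> col_of mu T x = j})"
    using card_column[OF T' srt, of "pm j"] column by simp
  also have "\<dots> = col_len mu j"
    using card_image[OF inj_on_subset[OF permutes_inj[OF s]]] card_column[OF T srt] by simp
  finally show ?thesis .
qed

lemma cell_transport:
  assumes T: "T \<in> tableaux d mu" and T': "T' \<in> tableaux d mu" and srt: "sorted_wrt (\<ge>) mu"
    and s: "s permutes {0..<d}" and pm: "inj pm"
    and hc: "\<forall>x<d. col_of mu T' (s x) = pm (col_of mu T x)"
  shows "\<exists>g. g permutes {0..<d} \<and>
    (\<forall>z<d. cell_of mu T' (g z) = (row_of mu T (inv s z), pm (col_of mu T (inv s z))))"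
proof -
  define cell where "cell z = (row_of mu T (inv s z), pm (col_of mu T (inv s z)))" for z
  have cell_in: "cell z \<in> cells mu" if "z < d" for z
  proof -
    obtain i j where ij: "cell_of mu T (inv s z) = (i, j)" by fastforce
    hence "i < col_len mu j"
      using cell_of_entry(1)[OF T permutes_inv_lt[OF s that]] cells_col_len[OF srt] by simp
    thus ?thesis using ij cells_col_len[OF srt] col_len_relabel[OF T T' srt s pm hc]
      by (simp add: cell_def row_of_def col_of_def)
  qed
  define g where "g z = (if z < d then T' (cell z) else z)" for z
  have g_into: "g ` {0..<d} \<subseteq> {0..<d}" using tableau_lt[OF T' cell_in] by (auto simp: g_def)
  have "inj_on g {0..<d}"
  proof (rule inj_onI)
    fix z w assume z: "z \<in> {0..<d}" and w: "w \<in> {0..<d}" and "g z = g w"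
    hence "cell z = cell w" using inj_onD[OF tableau_inj[OF T'] _ cell_in cell_in] by (simp add: g_def)
    hence "cell_of mu T (inv s z) = cell_of mu T (inv s w)"
      using pm by (simp add: cell_def row_of_def col_of_def inj_eq prod_eq_iff)
    hence "T (cell_of mu T (inv s z)) = T (cell_of mu T (inv s w))" by simp
    hence "inv s z = inv s w"
      using cell_of_entry(2)[OF T permutes_inv_lt[OF s]] z w by simp
    hence "s (inv s z) = s (inv s w)" by simp
    thus "z = w" using permutes_inverses(1)[OF s] by simp
  qed
  hence "g permutes {0..<d}"
    using g_into endo_inj_surj[OF _ g_into] by (intro bij_imp_permutes) (auto simp: bij_betw_def g_def)
  moreover have "\<forall>z<d. cell_of mu T' (g z) = cell z"
    using cell_of_cell[OF T' cell_in] by (simp add: g_def)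
  ultimately show ?thesis by (auto simp: cell_def)
qed

text \<open>Consequently relabelling by s turns the polytabloid of T into that of T', up to a
  scalar (namely sign g).\<close>
lemma polytabloid_relabel:
  assumes T: "T \<in> tableaux d mu" and T': "T' \<in> tableaux d mu" and srt: "sorted_wrt (\<ge>) mu"
    and s: "s permutes {0..<d}" and pm: "inj pm"
    and hc: "\<forall>x<d. col_of mu T' (s x) = pm (col_of mu T x)"
  shows "\<exists>e. \<forall>t. polytabloid d mu T (t \<circ> s) = e * polytabloid d mu T' t"
proof -
  obtain g where g: "g permutes {0..<d}"
    and gcell: "\<forall>z<d. cell_of mu T' (g z) = (row_of mu T (inv s z), pm (col_of mu T (inv s z)))"
    using cell_transport[OF T T' srt s pm hc] by blast
  let ?r = "row_of mu T \<circ> inv s" and ?c = "col_of mu T \<circ> inv s"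
  have c': "col_of mu T' z = pm (?c z)" if "z < d" for z
    using hc[rule_format, OF permutes_inv_lt[OF s that]] by (simp add: permutes_inverses(1)[OF s])
  have gc: "?c (g z) = ?c z" if "z < d" for z
  proof -
    have "pm (?c (g z)) = col_of mu T' (g z)" using c'[OF permutes_lt[OF g that]] by simp
    also have "\<dots> = pm (?c z)" using gcell that by (simp add: col_of_def)
    finally show ?thesis using pm by (simp add: inj_eq)
  qed
  have gr: "\<forall>z<d. row_of mu T' (g z) = ?r z" using gcell by (simp add: row_of_def)
  have cc: "\<forall>x<d. \<forall>y<d. col_of mu T' x = col_of mu T' y \<longleftrightarrow> ?c x = ?c y"
    using c' pm by (simp add: inj_eq)
  have "\<forall>z<d. ?c (g z) = ?c z" using gc by blast
  hence "gen_polytabloid d ?r ?c t = of_int (sign g) * gen_polytabloid d (row_of mu T') (col_of mu T') t"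
    for t by (rule gen_polytabloid_transport[OF g _ gr cc])
  thus ?thesis
    by (auto simp: polytabloid_eq_gen[OF T] polytabloid_eq_gen[OF T'] gen_polytabloid_relabel[OF s])
qed

lemma reynolds_relabel:
  assumes T1: "T1 \<in> tableaux d mu1" and T2: "T2 \<in> tableaux d mu2" and T3: "T3 \<in> tableaux d mu3"
    and T1': "T1' \<in> tableaux d mu1" and T2': "T2' \<in> tableaux d mu2" and T3': "T3' \<in> tableaux d mu3"
    and srt: "sorted_wrt (\<ge>) mu1" "sorted_wrt (\<ge>) mu2" "sorted_wrt (\<ge>) mu3"
    and s: "s permutes {0..<d}" and p: "inj p1" "inj p2" "inj p3"
    and hc: "\<forall>x<d. col_point mu1 mu2 mu3 T1' T2' T3' (s x)
               = (\<lambda>(a, b, c). (p1 a, p2 b, p3 c)) (col_point mu1 mu2 mu3 T1 T2 T3 x)"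
  shows "\<exists>e. reynolds d (poly_triple d mu1 mu2 mu3 T1 T2 T3)
           = fscale e (reynolds d (poly_triple d mu1 mu2 mu3 T1' T2' T3'))"
proof -
  have "\<forall>x<d. col_of mu1 T1' (s x) = p1 (col_of mu1 T1 x)"
    "\<forall>x<d. col_of mu2 T2' (s x) = p2 (col_of mu2 T2 x)"
    "\<forall>x<d. col_of mu3 T3' (s x) = p3 (col_of mu3 T3 x)"
    using hc by (simp_all add: col_point_def)
  then obtain e1 e2 e3
    where "\<forall>t. polytabloid d mu1 T1 (t \<circ> s) = e1 * polytabloid d mu1 T1' t"
      "\<forall>t. polytabloid d mu2 T2 (t \<circ> s) = e2 * polytabloid d mu2 T2' t"
      "\<forall>t. polytabloid d mu3 T3 (t \<circ> s) = e3 * polytabloid d mu3 T3' t"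
    using polytabloid_relabel[OF T1 T1' srt(1) s p(1)] polytabloid_relabel[OF T2 T2' srt(2) s p(2)]
      polytabloid_relabel[OF T3 T3' srt(3) s p(3)] by metis
  hence "perm_act s (poly_triple d mu1 mu2 mu3 T1 T2 T3)
      = fscale (e1 * e2 * e3) (poly_triple d mu1 mu2 mu3 T1' T2' T3')"
    by (auto simp: fun_eq_iff perm_act_def poly_triple_def fscale_def)
  hence "reynolds d (poly_triple d mu1 mu2 mu3 T1 T2 T3)
      = fscale (e1 * e2 * e3) (reynolds d (poly_triple d mu1 mu2 mu3 T1' T2' T3'))"
    using reynolds_perm_act[OF s] module_hom.scale[OF reynolds_module_hom] by metis
  thus ?thesis by blast
qed

lemma relabelling_exists:
  assumes h: "inj_on h {0..<d}" and h': "inj_on h' {0..<d}" and f: "inj f"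
    and img: "h' ` {0..<d} = f ` h ` {0..<d}"
  shows "\<exists>s. s permutes {0..<(d::nat)} \<and> (\<forall>x<d. h' (s x) = f (h x))"
proof -
  have "bij_betw (f \<circ> h) {0..<d} (h' ` {0..<d})"
    using img comp_inj_on[OF h inj_on_subset[OF f]] by (simp add: bij_betw_def image_comp)
  moreover have "bij_betw (the_inv_into {0..<d} h') (h' ` {0..<d}) {0..<d}"
    by (rule bij_betw_the_inv_into) (simp add: bij_betw_def h')
  ultimately have bij: "bij_betw (the_inv_into {0..<d} h' \<circ> (f \<circ> h)) {0..<d} {0..<d}"
    by (rule bij_betw_trans)
  define s where "s x = (if x < d then the_inv_into {0..<d} h' (f (h x)) else x)" for x
  have "bij_betw s {0..<d} {0..<d}"
    using bij by (rule bij_betw_cong[THEN iffD1, rotated]) (simp add: s_def)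
  hence "s permutes {0..<d}" by (rule bij_imp_permutes) (simp add: s_def)
  moreover have "h' (s x) = f (h x)" if "x < d" for x
  proof -
    have "f (h x) \<in> h' ` {0..<d}" using img that by auto
    thus ?thesis using f_the_inv_into_f[OF h'] that by (simp add: s_def)
  qed
  ultimately show ?thesis by blast
qed

lemma design_orbit_self: "H \<in> design_orbit l1 l2 l3 H"
proof -
  have "H = (\<lambda>(a, b, c). (id a, id b, id c)) ` H \<and>
      id permutes {0..<l1} \<and> id permutes {0..<l2} \<and> id permutes {0..<l3}"
    by (simp add: split_beta)
  thus ?thesis unfolding design_orbit_def by (intro CollectI exI)
qed

lemma inj_coordinatewise:
  fixes p1 p2 p3 :: "nat \<Rightarrow> nat"
  assumes "inj p1" "inj p2" "inj p3"
  shows "inj (\<lambda>(a, b, c). (p1 a, p2 b, p3 c))"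
proof (rule injI)
  fix u v :: point
  assume "(\<lambda>(a, b, c). (p1 a, p2 b, p3 c)) u = (\<lambda>(a, b, c). (p1 a, p2 b, p3 c)) v"
  thus "u = v" using assms by (cases u; cases v) (simp add: inj_eq)
qed

lemma reynolds_same_orbit:
  assumes P: "is_partition d mu1" "is_partition d mu2" "is_partition d mu3"
    and T1: "T1 \<in> tableaux d mu1" and T2: "T2 \<in> tableaux d mu2" and T3: "T3 \<in> tableaux d mu3"
    and T1': "T1' \<in> tableaux d mu1" and T2': "T2' \<in> tableaux d mu2" and T3': "T3' \<in> tableaux d mu3"
    and inj: "inj_on (col_point mu1 mu2 mu3 T1 T2 T3) {0..<d}"
    and inj': "inj_on (col_point mu1 mu2 mu3 T1' T2' T3') {0..<d}"
    and orbit: "design_orbit l1 l2 l3 (col_point mu1 mu2 mu3 T1 T2 T3 ` {0..<d})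
              = design_orbit l1 l2 l3 (col_point mu1 mu2 mu3 T1' T2' T3' ` {0..<d})"
  shows "\<exists>e. reynolds d (poly_triple d mu1 mu2 mu3 T1 T2 T3)
           = fscale e (reynolds d (poly_triple d mu1 mu2 mu3 T1' T2' T3'))"
proof -
  let ?h = "col_point mu1 mu2 mu3 T1 T2 T3" and ?h' = "col_point mu1 mu2 mu3 T1' T2' T3'"
  have "?h' ` {0..<d} \<in> design_orbit l1 l2 l3 (?h ` {0..<d})"
    unfolding orbit by (rule design_orbit_self)
  then obtain p1 p2 p3 where p: "p1 permutes {0..<l1}" "p2 permutes {0..<l2}" "p3 permutes {0..<l3}"
    and img: "?h' ` {0..<d} = (\<lambda>(a, b, c). (p1 a, p2 b, p3 c)) ` ?h ` {0..<d}"
    unfolding design_orbit_def by (elim CollectE exE conjE) simp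
  have pinj: "inj p1" "inj p2" "inj p3" using p by (simp_all add: permutes_inj)
  obtain s where s: "s permutes {0..<d}"
    and hc: "\<forall>x<d. ?h' (s x) = (\<lambda>(a, b, c). (p1 a, p2 b, p3 c)) (?h x)"
    using relabelling_exists[OF inj inj' inj_coordinatewise[OF pinj] img] by blast
  have "sorted_wrt (\<ge>) mu1" "sorted_wrt (\<ge>) mu2" "sorted_wrt (\<ge>) mu3"
    using P by (simp_all add: is_partition_def)
  thus ?thesis by (rule reynolds_relabel[OF T1 T2 T3 T1' T2' T3' _ _ _ s pinj hc])
qed

lemma finite_designs: "finite (designs mu1 mu2 mu3)"
proof -
  have "designs mu1 mu2 mu3 \<subseteq> Pow (box (first_part mu1) (first_part mu2) (first_part mu3))"
    by (auto simp: designs_def)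
  moreover have "finite (box (first_part mu1) (first_part mu2) (first_part mu3))"
    by (simp add: box_def)
  ultimately show ?thesis by (metis finite_Pow_iff finite_subset)
qed

lemma reynolds_span_by_orbits:
  assumes P: "is_partition d mu1" "is_partition d mu2" "is_partition d mu3"
  shows "\<exists>G. finite G \<and> card G \<le> num_designs mu1 mu2 mu3 \<and>
    (\<lambda>(T1, T2, T3). reynolds d (poly_triple d mu1 mu2 mu3 T1 T2 T3))
      ` (tableaux d mu1 \<times> tableaux d mu2 \<times> tableaux d mu3) \<subseteq> V.span G"
proof -
  define l1 l2 l3 where "l1 = first_part mu1" and "l2 = first_part mu2" and "l3 = first_part mu3"
  define Orbits where "Orbits = design_orbit l1 l2 l3 ` designs mu1 mu2 mu3"
  define A where "A = tableaux d mu1 \<times> tableaux d mu2 \<times> tableaux d mu3"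
  define v where "v = (\<lambda>(T1, T2, T3). reynolds d (poly_triple d mu1 mu2 mu3 T1 T2 T3))"
  define colmap where "colmap = (\<lambda>(T1, T2, T3). col_point mu1 mu2 mu3 T1 T2 T3)"
  define orbit where "orbit T = design_orbit l1 l2 l3 (colmap T ` {0..<d})" for T
  have "finite Orbits" using finite_designs by (simp add: Orbits_def)
  moreover have "v T = 0" if "T \<in> A" "\<not> inj_on (colmap T) {0..<d}" for T
    using that reynolds_vanishes by (cases T) (auto simp: A_def v_def colmap_def)
  moreover have "orbit T \<in> Orbits" if "T \<in> A" "inj_on (colmap T) {0..<d}" for T
    using that col_point_design[OF P]
    by (cases T) (auto simp: A_def orbit_def colmap_def Orbits_def l1_def l2_def l3_def)
  moreover have "\<exists>e. v T = fscale e (v T')"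
    if "T \<in> A" "T' \<in> A" "inj_on (colmap T) {0..<d}" "inj_on (colmap T') {0..<d}"
      "orbit T = orbit T'" for T T'
    using that reynolds_same_orbit[OF P]
    by (cases T; cases T') (auto simp: A_def v_def orbit_def colmap_def)
  ultimately obtain G where "finite G" "card G \<le> card Orbits" "v ` A \<subseteq> V.span G"
    using V.span_by_classes[of Orbits A "\<lambda>T. inj_on (colmap T) {0..<d}" v orbit] by blast
  moreover have "card Orbits = num_designs mu1 mu2 mu3"
    by (simp add: num_designs_def Orbits_def l1_def l2_def l3_def)
  ultimately show ?thesis unfolding A_def v_def by auto
qed

theorem mainTheorem8:
  fixes n d :: nat and lam1 lam2 lam3 :: "nat list"
  assumes "partition_le n d lam1" and "partition_le n d lam2" and "partition_le n d lam3"
  shows "kronecker lam1 lam2 lam3 \<le> num_designs lam1 lam2 lam3"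
proof -
  have P: "is_partition d lam1" "is_partition d lam2" "is_partition d lam3"
    using assms by (simp_all add: partition_le_def)
  obtain G where G: "finite G" "card G \<le> num_designs lam1 lam2 lam3"
    and span: "(\<lambda>(T1, T2, T3). reynolds d (poly_triple d lam1 lam2 lam3 T1 T2 T3))
                 ` (tableaux d lam1 \<times> tableaux d lam2 \<times> tableaux d lam3) \<subseteq> V.span G"
    using reynolds_span_by_orbits[OF P] by blast
  have "invariants d lam1 lam2 lam3 \<subseteq> V.span G"
    using subset_trans[OF invariants_in_reynolds_span V.span_mono[OF span]] by (simp add: V.span_span)
  hence "V.dim (invariants d lam1 lam2 lam3) \<le> card G" using G(1) by (rule V.dim_le_card)
  moreover have "kronecker lam1 lam2 lam3 = V.dim (invariants d lam1 lam2 lam3)"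
    using P by (simp add: kronecker_def is_partition_def)
  ultimately show ?thesis using G(2) by linarith
qed

end
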